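(* For all integers $n_1,n_2\ge0$, \[ \zeta(-2n_1-1,0,-2n_2-1|1)=-\zeta(-2n_1-1,-2n_2-1|1). \]
   Context: Normalized multiple Bernoulli polynomials: for integers $k\ge0$, $\zeta(-k|z)=-\frac{B_{k+1}(z)}{k+1}$ ($B_n(z)$ the Bernoulli polynomials, $B_n=B_n(0)$), and for $r\ge2$, $k_j\ge0$, $\zeta(-k_1,\ldots,-k_r|z)=-\frac{1}{k_r+1}\zeta(-k_1,\ldots,-k_{r-2},-k_{r-1}-k_r-1|z)-\frac12\zeta(-k_1,\ldots,-k_{r-2},-k_{r-1}-k_r|z)+\sum_{q=1}^{k_r}(-k_r)_q\frac{B_{q+1}}{(q+1)!}\zeta(-k_1,\ldots,-k_{r-2},-k_{r-1}-k_r+q|z)$, with $(a)_q=a(a+1)\cdots(a+q-1)$. *)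

theory Defs
  imports Complex_Main
begin

text \<open>Bernoulli numbers with the convention B_n = B_n(0) (so B_1 = -1/2),
  determined by B_0 = 1 and sum_{k=0}^{n} (n+1 choose k) B_k = 0 for n >= 1.
  bern_list n is the list [B_0, ..., B_n].\<close>
primrec bern_list :: "nat \<Rightarrow> real list" where
  "bern_list 0 = [1]"
| "bern_list (Suc n) = bern_list n @
     [- (\<Sum>k\<le>n. real ((n + 2) choose k) * (bern_list n ! k)) / real (n + 2)]"

definition bernoulli :: "nat \<Rightarrow> real" where
  "bernoulli n = last (bern_list n)"

definition bernpoly :: "nat \<Rightarrow> real \<Rightarrow> real" where
  "bernpoly n z = (\<Sum>k\<le>n. real (n choose k) * bernoulli k * z ^ (n - k))"

text \<open>The list argument holds the
  REVERSED list [k_r, k_(r-1), ..., k_1] of the (nonnegative) k_j; the value is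
  zeta(-k_1,...,-k_r | z). The empty list (r = 0) is not used and given value 0.\<close>
fun mzeta_rev :: "nat list \<Rightarrow> real \<Rightarrow> real" where
  "mzeta_rev [] z = 0"
| "mzeta_rev [k] z = - bernpoly (k + 1) z / real (k + 1)"
| "mzeta_rev (b # a # rest) z =
     - (1 / real (b + 1)) * mzeta_rev ((a + b + 1) # rest) z
     - (1 / 2) * mzeta_rev ((a + b) # rest) z
     + (\<Sum>q = 1..b. pochhammer (- real b) q * bernoulli (q + 1) / fact (q + 1)
                     * mzeta_rev ((a + b - q) # rest) z)"

text \<open>mzeta [k_1, ..., k_r] z = zeta(-k_1, ..., -k_r | z).\<close>
definition mzeta :: "nat list \<Rightarrow> real \<Rightarrow> real" where
  "mzeta ks z = mzeta_rev (rev ks) z"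

end

theory Submission imports Defs "HOL-Computational_Algebra.Formal_Power_Series" begin

text \<open>Unfolding the recursion at the middle argument \<open>0\<close> gives
  \<open>\<zeta>(-a, 0, -b | 1) = -\<zeta>(-a, -b | 1) - (b + 1)\<^sup>-\<^sup>1 \<Sum>\<^sub>j c\<^sub>j \<zeta>(-a, -j | 1)\<close>, where \<open>c\<^sub>j\<close>
  are the coefficients of \<open>B\<^sub>b\<^sub>+\<^sub>1(x)\<close>. Unfolding once more, the sum is \<open>\<Lambda>(x\<^sup>a H(x + 1))\<close>
  for the linear functional \<open>\<Lambda>(x\<^sup>n) = B\<^sub>n\<^sub>+\<^sub>1(1) / (n + 1)\<close> and an antidifference \<open>H\<close> of
  \<open>B\<^sub>b\<^sub>+\<^sub>1\<close>. By the reflection and difference equations of the Bernoulli polynomials,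
  \<open>\<Lambda>\<close> vanishes on even polynomials without constant term, and for odd \<open>b\<close> the
  antidifference satisfies \<open>H(1 - x) = -H(1 + x)\<close>, so \<open>x\<^sup>a H(x + 1)\<close> is such a
  polynomial when \<open>a\<close> is odd as well.\<close>

unbundle fps_syntax

lemma length_bern_list: "length (bern_list n) = Suc n"
  by (induction n) auto

lemma nth_bern_list_add: "k \<le> n \<Longrightarrow> bern_list (n + m) ! k = bern_list n ! k"
  by (induction m) (simp_all add: nth_append length_bern_list)

lemma nth_bern_list: "k \<le> n \<Longrightarrow> bern_list n ! k = bernoulli k"
proof -
  assume "k \<le> n"
  then obtain m where n: "n = k + m" using le_Suc_ex by blast
  have "bernoulli k = bern_list k ! k"
    unfolding bernoulli_def
    by (subst last_conv_nth) (auto simp: length_bern_list simp flip: length_greater_0_conv)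
  then show ?thesis using n nth_bern_list_add[of k k m] by simp
qed

lemma bernoulli_0 [simp]: "bernoulli 0 = 1"
  by (simp add: bernoulli_def)

lemma bernoulli_Suc:
  "bernoulli (Suc n) = - (\<Sum>k\<le>n. real ((n + 2) choose k) * bernoulli k) / real (n + 2)"
proof -
  have "bernoulli (Suc n) =
      - (\<Sum>k\<le>n. real ((n + 2) choose k) * (bern_list n ! k)) / real (n + 2)"
    unfolding bernoulli_def by simp
  also have "(\<Sum>k\<le>n. real ((n + 2) choose k) * (bern_list n ! k)) =
      (\<Sum>k\<le>n. real ((n + 2) choose k) * bernoulli k)"
    by (intro sum.cong) (auto simp: nth_bern_list)
  finally show ?thesis .
qed

lemma bernoulli_1 [simp]: "bernoulli (Suc 0) = - 1/2"
  using bernoulli_Suc[of 0] by simp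

lemma sum_binomial_bernoulli_eq_0:
  "n \<noteq> 0 \<Longrightarrow> (\<Sum>k\<le>n. real (Suc n choose k) * bernoulli k) = 0"
  by (cases n) (simp_all add: bernoulli_Suc)

lemma bernoulli_egf:
  fixes c :: real
  shows "Abs_fps (\<lambda>n. c ^ n * bernoulli n / fact n) * (fps_exp c - 1) = fps_const c * fps_X"
proof (rule fps_ext)
  fix n
  show "(Abs_fps (\<lambda>n. c ^ n * bernoulli n / fact n) * (fps_exp c - 1)) $ n = (fps_const c * fps_X) $ n"
  proof (cases n)
    case (Suc m)
    have summand: "c ^ i * bernoulli i / fact i * (c ^ (Suc m - i) / fact (Suc m - i)) =
        c ^ Suc m / fact (Suc m) * (real (Suc m choose i) * bernoulli i)" if "i \<le> m" for i
    proof -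
      have pow: "c ^ i * c ^ (Suc m - i) = c ^ Suc m" using that by (simp flip: power_add)
      have "c ^ i * bernoulli i / fact i * (c ^ (Suc m - i) / fact (Suc m - i)) =
          (c ^ i * c ^ (Suc m - i)) * (bernoulli i / (fact i * fact (Suc m - i)))"
        by simp
      also have "\<dots> =
          c ^ Suc m / fact (Suc m) * (fact (Suc m) / (fact i * fact (Suc m - i)) * bernoulli i)"
        unfolding pow by (simp del: fact_Suc)
      also have "fact (Suc m) / (fact i * fact (Suc m - i)) = real (Suc m choose i)"
        using that by (simp add: binomial_fact)
      finally show ?thesis .
    qed
    have "(Abs_fps (\<lambda>n. c ^ n * bernoulli n / fact n) * (fps_exp c - 1)) $ n =
        (\<Sum>i\<le>m. c ^ i * bernoulli i / fact i * (c ^ (Suc m - i) / fact (Suc m - i)))"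
      by (simp add: fps_mult_nth Suc atLeast0AtMost) (intro sum.cong refl; simp add: ac_simps)
    also have "\<dots> = c ^ Suc m / fact (Suc m) * (\<Sum>i\<le>m. real (Suc m choose i) * bernoulli i)"
      unfolding sum_distrib_left by (intro sum.cong refl summand) simp
    also have "\<dots> = (fps_const c * fps_X) $ n"
      using sum_binomial_bernoulli_eq_0[of m] by (cases "m = 0") (simp_all add: Suc)
    finally show ?thesis .
  qed (simp add: fps_mult_nth)
qed

text \<open>The generating function \<open>E X = X / (e\<^sup>X - 1)\<close> satisfies \<open>E (-X) = E X + X\<close>.\<close>
lemma bernoulli_odd_eq_0:
  assumes "odd n" "n \<noteq> 1"
  shows "bernoulli n = 0"
proof -
  define E where "E = Abs_fps (\<lambda>n. 1 ^ n * bernoulli n / fact n :: real)"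
  define E' where "E' = Abs_fps (\<lambda>n. (-1) ^ n * bernoulli n / fact n :: real)"
  have E: "E * (fps_exp 1 - 1) = fps_X"
    using bernoulli_egf[of 1] by (simp add: E_def)
  have "fps_const (-1::real) = -1"
    by (simp add: fps_eq_iff)
  then have E': "E' * (fps_exp (-1) - 1) = - fps_X"
    using bernoulli_egf[of "-1"] by (simp add: E'_def)
  have exp_inv: "fps_exp (-1) * fps_exp 1 = (1 :: real fps)"
    by (simp flip: fps_exp_add_mult)
  have "- (E' * (fps_exp (-1) - 1)) * fps_exp 1 = E' * fps_exp 1 - E' * (fps_exp (-1) * fps_exp 1)"
    by (simp add: algebra_simps)
  also have "\<dots> = E' * (fps_exp 1 - 1)"
    by (simp add: exp_inv right_diff_distrib)
  finally have "E' * (fps_exp 1 - 1) = E * (fps_exp 1 - 1) * fps_exp 1"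
    using E E' by simp
  then have "E' * (fps_exp 1 - 1) = (E * fps_exp 1) * (fps_exp 1 - 1)"
    by (simp only: mult.assoc mult.commute[of "fps_exp 1 - 1" "fps_exp 1"])
  moreover have "(fps_exp 1 - 1 :: real fps) $ 1 \<noteq> 0"
    by simp
  ultimately have "E' = E * fps_exp 1"
    by (metis mult_right_cancel fps_nonzero_nth)
  also have "\<dots> = E + E * (fps_exp 1 - 1)"
    by (simp add: algebra_simps)
  finally have "E' $ n = (E + fps_X) $ n"
    using E by simp
  then show ?thesis
    using assms by (simp add: E_def E'_def fps_X_def)
qed

lemma bernpoly_1: "bernpoly n 1 = (-1) ^ n * bernoulli n"
proof (cases n)
  case (Suc m)
  have "bernpoly n 1 = (\<Sum>k\<le>m. real (Suc m choose k) * bernoulli k) + bernoulli n"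
    by (simp add: bernpoly_def Suc)
  also have "\<dots> = (-1) ^ n * bernoulli n"
    using sum_binomial_bernoulli_eq_0[of m] bernoulli_odd_eq_0[of n]
    by (cases "m = 0"; cases "even m") (auto simp: Suc)
  finally show ?thesis .
qed (simp add: bernpoly_def)

lemma bernpoly_1_minus_bernoulli: "bernpoly m 1 - bernoulli m = (if m = 1 then 1 else 0)"
  using bernoulli_odd_eq_0[of m] by (cases "even m") (auto simp: bernpoly_1)

definition bernpoly_coeff :: "nat \<Rightarrow> nat \<Rightarrow> real" where
  "bernpoly_coeff n i = real (n choose i) * bernoulli (n - i)"

lemma bernpoly_eq_sum_coeff: "bernpoly n x = (\<Sum>i\<le>n. bernpoly_coeff n i * x ^ i)"
  unfolding bernpoly_def bernpoly_coeff_def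
  by (rule sum.reindex_bij_witness[where i="\<lambda>i. n - i" and j="\<lambda>i. n - i"])
     (auto simp: binomial_symmetric[symmetric])

lemma binomial_mult_binomial_swap:
  assumes "k + i \<le> n"
  shows "(n choose k) * ((n - k) choose i) = (n choose i) * ((n - i) choose k)"
proof -
  have "(n choose k) * ((n - k) choose i) = (n choose (k + i)) * ((k + i) choose k)"
    using choose_mult[of k "k + i" n] assms by simp
  also have "\<dots> = (n choose i) * ((n - i) choose k)"
    using choose_mult[of i "k + i" n] assms binomial_symmetric[of k "k + i"] by simp
  finally show ?thesis .
qed

lemma sum_atMost_triangle_swap:
  "(\<Sum>k\<le>n. \<Sum>i\<le>n - k. f k i) = (\<Sum>i\<le>(n::nat). \<Sum>k\<le>n - i. f k i)"
proof -
  have trunc: "(\<Sum>i\<le>n - k. g i) = (\<Sum>i\<le>n. if k + i \<le> n then g i else 0)" if "k \<le> n" for k and g :: "nat \<Rightarrow> 'a"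
    using that by (intro sum.mono_neutral_cong_left) auto
  have "(\<Sum>k\<le>n. \<Sum>i\<le>n - k. f k i) = (\<Sum>k\<le>n. \<Sum>i\<le>n. if k + i \<le> n then f k i else 0)"
    by (intro sum.cong refl trunc) auto
  also have "\<dots> = (\<Sum>i\<le>n. \<Sum>k\<le>n. if k + i \<le> n then f k i else 0)"
    by (rule sum.swap)
  also have "\<dots> = (\<Sum>i\<le>n. \<Sum>k\<le>n - i. f k i)"
    by (intro sum.cong refl trunc[symmetric, where g="\<lambda>k. f k _", simplified add.commute]) auto
  finally show ?thesis .
qed

lemma bernpoly_add:
  "bernpoly n (y + x) = (\<Sum>i\<le>n. real (n choose i) * x ^ i * bernpoly (n - i) y)"
proof -
  have "bernpoly n (y + x) = (\<Sum>k\<le>n. \<Sum>i\<le>n - k.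
          real (n choose k) * bernoulli k * (real ((n - k) choose i) * x ^ i * y ^ (n - k - i)))"
    by (simp only: bernpoly_def add.commute[of y x] binomial_ring sum_distrib_left)
  also have "\<dots> = (\<Sum>i\<le>n. \<Sum>k\<le>n - i.
          real (n choose k) * bernoulli k * (real ((n - k) choose i) * x ^ i * y ^ (n - k - i)))"
    by (rule sum_atMost_triangle_swap)
  also have "\<dots> = (\<Sum>i\<le>n. \<Sum>k\<le>n - i.
          real (n choose i) * x ^ i * (real ((n - i) choose k) * bernoulli k * y ^ (n - i - k)))"
  proof (intro sum.cong refl)
    fix i k assume "i \<in> {..n}" "k \<in> {..n - i}"
    then have swap: "real (n choose k) * real ((n - k) choose i) = real (n choose i) * real ((n - i) choose k)"
      using binomial_mult_binomial_swap[of k i n] by (simp flip: of_nat_mult)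
    have "real (n choose k) * bernoulli k * (real ((n - k) choose i) * x ^ i * y ^ (n - k - i)) =
        (real (n choose k) * real ((n - k) choose i)) * (bernoulli k * x ^ i * y ^ (n - k - i))"
      by (simp only: ac_simps)
    also have "\<dots> = (real (n choose i) * real ((n - i) choose k)) * (bernoulli k * x ^ i * y ^ (n - i - k))"
      unfolding swap diff_commute[of n k i] ..
    also have "\<dots> = real (n choose i) * x ^ i * (real ((n - i) choose k) * bernoulli k * y ^ (n - i - k))"
      by (simp only: ac_simps)
    finally show "real (n choose k) * bernoulli k * (real ((n - k) choose i) * x ^ i * y ^ (n - k - i)) =
          real (n choose i) * x ^ i * (real ((n - i) choose k) * bernoulli k * y ^ (n - i - k))" .
  qed
  also have "\<dots> = (\<Sum>i\<le>n. real (n choose i) * x ^ i * bernpoly (n - i) y)"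
    unfolding bernpoly_def by (simp add: sum_distrib_left)
  finally show ?thesis .
qed

lemma bernpoly_plus_1: "bernpoly (Suc n) (x + 1) = bernpoly (Suc n) x + real (Suc n) * x ^ n"
proof -
  have "bernpoly (Suc n) (x + 1) - bernpoly (Suc n) x =
     (\<Sum>i\<le>Suc n. real (Suc n choose i) * x ^ i * bernpoly (Suc n - i) 1 - bernpoly_coeff (Suc n) i * x ^ i)"
    by (simp only: add.commute[of x 1] bernpoly_add[of _ 1 x] bernpoly_eq_sum_coeff[of _ x] sum_subtractf)
  also have "\<dots> =
     (\<Sum>i\<le>Suc n. real (Suc n choose i) * x ^ i * (bernpoly (Suc n - i) 1 - bernoulli (Suc n - i)))"
    by (intro sum.cong refl) (simp add: bernpoly_coeff_def algebra_simps)
  also have "\<dots> = (\<Sum>i\<le>Suc n. if i = n then real (Suc n) * x ^ n else 0)"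
    unfolding bernpoly_1_minus_bernoulli by (intro sum.cong refl) auto
  also have "\<dots> = real (Suc n) * x ^ n"
    by simp
  finally show ?thesis by simp
qed

lemma bernpoly_1_minus: "bernpoly n (1 - x) = (-1) ^ n * bernpoly n x"
proof -
  have "bernpoly n (1 - x) = (\<Sum>i\<le>n. real (n choose i) * (-x) ^ i * ((-1) ^ (n - i) * bernoulli (n - i)))"
    using bernpoly_add[of n 1 "-x"] by (simp add: bernpoly_1)
  also have "\<dots> = (\<Sum>i\<le>n. (-1) ^ n * (bernpoly_coeff n i * x ^ i))"
  proof (intro sum.cong refl)
    fix i assume "i \<in> {..n}"
    then have "(-1::real) ^ i * (-1) ^ (n - i) = (-1) ^ n" by (simp flip: power_add)
    then show "real (n choose i) * (-x) ^ i * ((-1) ^ (n - i) * bernoulli (n - i)) =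
          (-1) ^ n * (bernpoly_coeff n i * x ^ i)"
      by (simp add: bernpoly_coeff_def power_minus[of x] algebra_simps)
  qed
  also have "\<dots> = (-1) ^ n * bernpoly n x"
    by (simp add: bernpoly_eq_sum_coeff sum_distrib_left)
  finally show ?thesis .
qed

lemma pochhammer_minus_real_eq_binomial:
  "pochhammer (- real k) q = (-1) ^ q * real (Suc k choose Suc q) * fact (Suc q) / real (Suc k)"
proof -
  have "real (Suc k choose Suc q) * real (Suc q) = real (Suc k) * real (k choose q)"
    using Suc_times_binomial_eq[of k q] by (simp only: of_nat_mult[symmetric] mult.commute)
  then have "(-1) ^ q * real (Suc k choose Suc q) * fact (Suc q) / real (Suc k) =
      (-1) ^ q * (real (Suc k) * real (k choose q)) * fact q / real (Suc k)"
    by (simp only: fact_Suc mult_ac)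
  also have "\<dots> = (-1) ^ q * real (k choose q) * fact q"
    by (simp del: of_nat_Suc)
  also have "\<dots> = pochhammer (- real k) q"
    by (simp add: gbinomial_pochhammer binomial_gbinomial)
  finally show ?thesis ..
qed

text \<open>The three parts of the defining recursion are the terms \<open>j = k + 1\<close>, \<open>j = k\<close> and
  \<open>j = k - q\<close> of a single binomial sum.\<close>
lemma mzeta_rev_Cons_Cons:
  "mzeta_rev (k # a # rest) z = - 1 / real (k + 1) *
     (\<Sum>j\<le>k+1. real ((k+1) choose j) * bernpoly (k + 1 - j) 1 * mzeta_rev ((a + j) # rest) z)"
proof -
  define M where "M j = mzeta_rev ((a + j) # rest) z" for j
  have "(\<Sum>j\<le>k+1. real ((k+1) choose j) * bernpoly (k + 1 - j) 1 * M j) =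
        (\<Sum>j<k. real ((k+1) choose j) * bernpoly (k + 1 - j) 1 * M j) + real (k+1) * (1/2) * M k + M (k+1)"
  proof -
    have "{..k+1} = insert (k+1) (insert k {..<k})" by auto
    moreover have "bernpoly 1 1 = 1/2" "bernpoly 0 1 = 1"
      by (simp_all add: bernpoly_def)
    ultimately show ?thesis by (simp add: algebra_simps)
  qed
  also have "(\<Sum>j<k. real ((k+1) choose j) * bernpoly (k + 1 - j) 1 * M j) =
        (\<Sum>q=1..k. real ((k+1) choose (k - q)) * bernpoly (q + 1) 1 * M (k - q))"
    by (rule sum.reindex_bij_witness[where i="\<lambda>q. k - q" and j="\<lambda>j. k - j"]) (auto simp: Suc_diff_le)
  also have "\<dots> = - real (k + 1) *
      (\<Sum>q=1..k. pochhammer (- real k) q * bernoulli (q + 1) / fact (q + 1) * M (k - q))"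
    unfolding sum_distrib_left
  proof (intro sum.cong refl)
    fix q assume q: "q \<in> {1..k}"
    then have "(k+1) choose (k - q) = (k+1) choose (q + 1)"
      using binomial_symmetric[of "q+1" "k+1"] by simp
    moreover have "bernpoly (q + 1) 1 = - ((-1) ^ q * bernoulli (q + 1))"
      by (simp add: bernpoly_1)
    moreover have "pochhammer (- real k) q * bernoulli (q + 1) / fact (q + 1) * M (k - q) =
        (pochhammer (- real k) q / fact (q + 1)) * bernoulli (q + 1) * M (k - q)"
      by simp
    ultimately show "real ((k+1) choose (k - q)) * bernpoly (q + 1) 1 * M (k - q) =
       - real (k + 1) * (pochhammer (- real k) q * bernoulli (q + 1) / fact (q + 1) * M (k - q))"
      unfolding pochhammer_minus_real_eq_binomial using q
      by (simp add: field_simps del: of_nat_Suc binomial_Suc_Suc fact_Suc)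
  qed
  finally have sum: "(\<Sum>j\<le>k+1. real ((k+1) choose j) * bernpoly (k + 1 - j) 1 * M j) =
      - real (k + 1) *
        (\<Sum>q=1..k. pochhammer (- real k) q * bernoulli (q + 1) / fact (q + 1) * M (k - q))
      + real (k+1) * (1/2) * M k + M (k+1)" .
  have "mzeta_rev (k # a # rest) z = - (1 / real (k + 1)) * M (k + 1) - (1/2) * M k
     + (\<Sum>q=1..k. pochhammer (- real k) q * bernoulli (q + 1) / fact (q + 1) * M (k - q))"
    by (simp add: M_def add.commute add.left_commute)
  also have "\<dots> = - 1 / real (k + 1) * (\<Sum>j\<le>k+1. real ((k+1) choose j) * bernpoly (k + 1 - j) 1 * M j)"
    unfolding sum by (simp add: field_simps del: of_nat_Suc)
  finally show ?thesis by (simp add: M_def)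
qed

lemma mzeta_rev_Cons_0_Cons:
  "mzeta_rev (b # 0 # rest) z = - mzeta_rev (b # rest) z
     - (\<Sum>j\<le>b+1. bernpoly_coeff (b+1) j * mzeta_rev (j # rest) z) / real (b + 1)"
proof -
  define Y where "Y j = mzeta_rev (j # rest) z" for j
  have "(\<Sum>j\<le>b+1. real ((b+1) choose j) * bernpoly (b + 1 - j) 1 * Y j) -
        (\<Sum>j\<le>b+1. bernpoly_coeff (b+1) j * Y j) =
        (\<Sum>j\<le>b+1. real ((b+1) choose j) * (bernpoly (b + 1 - j) 1 - bernoulli (b + 1 - j)) * Y j)"
    unfolding sum_subtractf[symmetric]
    by (intro sum.cong refl) (simp add: bernpoly_coeff_def algebra_simps)
  also have "\<dots> = (\<Sum>j\<le>b+1. if j = b then real (b + 1) * Y b else 0)"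
    unfolding bernpoly_1_minus_bernoulli by (intro sum.cong refl) auto
  finally have "(\<Sum>j\<le>b+1. real ((b+1) choose j) * bernpoly (b + 1 - j) 1 * Y j) =
        (\<Sum>j\<le>b+1. bernpoly_coeff (b+1) j * Y j) + real (b + 1) * Y b"
    by simp
  then show ?thesis
    using mzeta_rev_Cons_Cons[of b 0 rest z] by (simp add: Y_def field_simps del: of_nat_Suc)
qed

text \<open>As a linear functional of \<open>c\<close>, its
  value at \<open>1\<close> is what the double values \<open>\<zeta>(-a, -j | 1)\<close> reduce to.\<close>
definition antidiff :: "(nat \<Rightarrow> real) \<Rightarrow> nat \<Rightarrow> real \<Rightarrow> real" where
  "antidiff c N x = (\<Sum>i\<le>N. c i * (bernpoly (i + 1) x / real (i + 1)))"

lemma antidiff_plus_1: "antidiff c N (x + 1) = antidiff c N x + (\<Sum>i\<le>N. c i * x ^ i)"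
proof -
  have "bernpoly (i + 1) (x + 1) / real (i + 1) = bernpoly (i + 1) x / real (i + 1) + x ^ i" for i
    using bernpoly_plus_1[of i x] by (simp add: field_simps del: of_nat_Suc)
  then show ?thesis
    unfolding antidiff_def by (simp add: distrib_left sum.distrib)
qed

lemma antidiff_1_minus: "antidiff c N (1 - x) = - antidiff (\<lambda>i. (-1) ^ i * c i) N x"
  unfolding antidiff_def by (simp add: bernpoly_1_minus flip: sum_negf) (intro sum.cong refl; simp add: ac_simps)

text \<open>On an even polynomial, \<open>antidiff\<close> is odd about \<open>1/2\<close>; combined with the difference
  equation this pins down its value at \<open>1\<close>.\<close>
lemma antidiff_1_eq_0:
  assumes even: "\<And>x. (\<Sum>n\<le>N. c n * (-x) ^ n) = (\<Sum>n\<le>N. c n * x ^ n)" and c0: "c 0 = 0"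
  shows "antidiff c N 1 = 0"
proof -
  have "(\<Sum>n\<le>N. ((-1) ^ n * c n) * x ^ n) = (\<Sum>n\<le>N. c n * x ^ n)" for x
    unfolding even[of x, symmetric] by (intro sum.cong refl) (simp add: power_minus[of x])
  then have "\<forall>n\<le>N. (-1) ^ n * c n = c n"
    using polyfun_eq_coeffs[of "\<lambda>n. (-1) ^ n * c n" N c] by blast
  then have "antidiff (\<lambda>n. (-1) ^ n * c n) N 0 = antidiff c N 0"
    unfolding antidiff_def by (intro sum.cong) auto
  then have "antidiff c N 1 = - antidiff c N 0"
    using antidiff_1_minus[of c N 0] by simp
  moreover have "(\<Sum>n\<le>N. c n * 0 ^ n) = 0"
    using c0 by (intro sum.neutral) (auto simp: power_0_left)
  then have "antidiff c N 1 = antidiff c N 0"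
    using antidiff_plus_1[of c N 0] by simp
  ultimately show ?thesis by simp
qed

lemma minus_one_power_bernpoly_coeff:
  assumes "even n" "i \<le> n"
  shows "(-1) ^ i * bernpoly_coeff n i = bernpoly_coeff n i + (if Suc i = n then real n else 0)"
proof -
  have "(-1::real) ^ i = (-1) ^ (n - i)"
    using assms by (cases "even i") auto
  then have "(-1) ^ i * bernpoly_coeff n i - bernpoly_coeff n i =
      real (n choose i) * (bernpoly (n - i) 1 - bernoulli (n - i))"
    by (simp add: bernpoly_coeff_def bernpoly_1 algebra_simps)
  also have "\<dots> = (if Suc i = n then real n else 0)"
    unfolding bernpoly_1_minus_bernoulli using assms(2) by auto
  finally show ?thesis by simp
qed

lemma antidiff_bernpoly_coeff_1_minus:
  assumes "even n" "n \<noteq> 0"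
  shows "antidiff (bernpoly_coeff n) n (1 - x) = - antidiff (bernpoly_coeff n) n (x + 1)"
proof -
  have "antidiff (\<lambda>i. (-1) ^ i * bernpoly_coeff n i) n x =
      antidiff (bernpoly_coeff n) n x + (\<Sum>i\<le>n. if Suc i = n then bernpoly n x else 0)"
    unfolding antidiff_def sum.distrib[symmetric]
  proof (intro sum.cong refl)
    fix i assume "i \<in> {..n}"
    then have sign: "(-1) ^ i * bernpoly_coeff n i =
        bernpoly_coeff n i + (if Suc i = n then real n else 0)"
      using assms(1) by (intro minus_one_power_bernpoly_coeff) simp_all
    show "(-1) ^ i * bernpoly_coeff n i * (bernpoly (i + 1) x / real (i + 1)) =
        bernpoly_coeff n i * (bernpoly (i + 1) x / real (i + 1)) + (if Suc i = n then bernpoly n x else 0)"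
      unfolding sign by (cases "Suc i = n") (auto simp: field_simps)
  qed
  also have "(\<Sum>i\<le>n. if Suc i = n then bernpoly n x else 0) = bernpoly n x"
    using assms(2) by (cases n) auto
  also have "antidiff (bernpoly_coeff n) n x + bernpoly n x = antidiff (bernpoly_coeff n) n (x + 1)"
    by (simp add: antidiff_plus_1 bernpoly_eq_sum_coeff)
  finally show ?thesis
    using antidiff_1_minus[of "bernpoly_coeff n" n x] by simp
qed

lemma sum_atMost_shift:
  fixes a K :: nat
  shows "(\<Sum>n\<le>a + K. (if a \<le> n then f (n - a) else 0) * h n) = (\<Sum>i\<le>K. f i * h (a + i) :: 'a::comm_semiring_0)"
proof -
  have "(\<Sum>n\<le>a + K. (if a \<le> n then f (n - a) else 0) * h n) = (\<Sum>n\<in>{a..a + K}. f (n - a) * h n)"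
    by (intro sum.mono_neutral_cong_right) auto
  also have "\<dots> = (\<Sum>i\<le>K. f i * h (a + i))"
    by (rule sum.reindex_bij_witness[where i="\<lambda>i. a + i" and j="\<lambda>n. n - a"]) auto
  finally show ?thesis .
qed

lemma sum_bernpoly_coeff_mzeta_rev_eq_0:
  assumes "odd a" "odd b"
  shows "(\<Sum>j\<le>b+1. bernpoly_coeff (b+1) j * mzeta_rev [j, a] 1) = 0"
proof -
  define H where "H = antidiff (bernpoly_coeff (b+1)) (b+1)"
  define w where "w j i = real ((j+1) choose i) * bernpoly (j + 1 - i) 1 / real (j + 1)" for j i
  define e where "e i = (\<Sum>j\<le>b+1. bernpoly_coeff (b+1) j * w j i)" for i
  define g where "g n = (if a \<le> n then e (n - a) else 0)" for n
    \<comment> \<open>the coefficients of \<open>x\<^sup>a H (x + 1)\<close>, see \<open>poly\<close> below\<close>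
  have collect: "(\<Sum>j\<le>b+1. bernpoly_coeff (b+1) j * (\<Sum>i\<le>j+1. w j i * h i)) = (\<Sum>i\<le>b+2. e i * h i)"
    for h :: "nat \<Rightarrow> real"
  proof -
    have "(\<Sum>i\<le>j+1. w j i * h i) = (\<Sum>i\<le>b+2. w j i * h i)" if "j \<le> b + 1" for j
      using that by (intro sum.mono_neutral_left) (auto simp: w_def)
    then have "(\<Sum>j\<le>b+1. bernpoly_coeff (b+1) j * (\<Sum>i\<le>j+1. w j i * h i)) =
        (\<Sum>j\<le>b+1. \<Sum>i\<le>b+2. bernpoly_coeff (b+1) j * w j i * h i)"
      by (intro sum.cong refl) (simp only: atMost_iff sum_distrib_left mult.assoc)
    also have "\<dots> = (\<Sum>i\<le>b+2. e i * h i)"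
      unfolding e_def sum_distrib_right by (rule sum.swap)
    finally show ?thesis .
  qed
  have mzeta_pair: "mzeta_rev [j, a] 1 = (\<Sum>i\<le>j+1. w j i * (bernpoly (a + i + 1) 1 / real (a + i + 1)))" for j
    unfolding mzeta_rev_Cons_Cons sum_distrib_left w_def
    by (intro sum.cong refl) (simp add: field_simps del: of_nat_Suc)
  have "(\<Sum>j\<le>b+1. bernpoly_coeff (b+1) j * mzeta_rev [j, a] 1) =
      (\<Sum>i\<le>b+2. e i * (bernpoly (a + i + 1) 1 / real (a + i + 1)))"
    by (simp only: mzeta_pair collect)
  also have "\<dots> = antidiff g (a + (b + 2)) 1"
    unfolding antidiff_def g_def
    by (rule sum_atMost_shift[where K="b + 2" and f=e and h="\<lambda>n. bernpoly (n + 1) 1 / real (n + 1)", symmetric])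
  also have "\<dots> = 0"
  proof (rule antidiff_1_eq_0)
    have poly: "(\<Sum>n\<le>a + (b + 2). g n * x ^ n) = x ^ a * H (x + 1)" for x
    proof -
      have w_sum: "(\<Sum>i\<le>j+1. w j i * x ^ i) = bernpoly (j + 1) (x + 1) / real (j + 1)" for j
        unfolding w_def bernpoly_add[of "j + 1" 1 x, simplified add.commute[of 1 x]] sum_divide_distrib
        by (intro sum.cong refl) simp
      have "(\<Sum>n\<le>a + (b + 2). g n * x ^ n) = (\<Sum>i\<le>b+2. e i * x ^ (a + i))"
        unfolding g_def by (rule sum_atMost_shift[where K="b + 2" and f=e and h="\<lambda>n. x ^ n"])
      also have "\<dots> = x ^ a * (\<Sum>i\<le>b+2. e i * x ^ i)"
        unfolding power_add sum_distrib_left by (simp only: ac_simps)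
      also have "(\<Sum>i\<le>b+2. e i * x ^ i) = (\<Sum>j\<le>b+1. bernpoly_coeff (b+1) j * (\<Sum>i\<le>j+1. w j i * x ^ i))"
        by (rule collect[symmetric])
      also have "\<dots> = H (x + 1)"
        unfolding H_def antidiff_def w_sum ..
      finally show ?thesis .
    qed
    show "(\<Sum>n\<le>a + (b + 2). g n * (- x) ^ n) = (\<Sum>n\<le>a + (b + 2). g n * x ^ n)" for x
      using poly[of "-x"] poly[of x] antidiff_bernpoly_coeff_1_minus[of "b + 1" x] assms
      by (simp add: H_def)
    show "g 0 = 0"
      using \<open>odd a\<close> by (auto simp: g_def)
  qed
  finally show ?thesis .
qed

theorem proposition3p5:
  fixes n1 n2 :: nat
  shows "mzeta [2 * n1 + 1, 0, 2 * n2 + 1] 1 = - mzeta [2 * n1 + 1, 2 * n2 + 1] 1"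
  using mzeta_rev_Cons_0_Cons[of "2 * n2 + 1" "[2 * n1 + 1]" 1]
    sum_bernpoly_coeff_mzeta_rev_eq_0[of "2 * n1 + 1" "2 * n2 + 1"]
  by (simp add: mzeta_def)

end
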